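(* Let $J$ be a countable set and $\mathcal{A}$ the non-unital algebra of finitely supported functions $J\to\mathbb{R}$ with pointwise operations. Let $\sigma:J\to J$ be a bijection and $\tilde{\sigma}(f)=f\circ\sigma^{-1}$. In the skew polynomial ring $\mathcal{A}[x,\tilde{\sigma},0]$, the centralizer of $\mathcal{A}$ is $$C(\mathcal{A})=\Big\{\sum_{k=0}^m f_kx^k : f_k\in\mathcal{A},\ f_k=0\text{ on } Sep^k(J)\text{ for all }k\Big\}.$$
   Context: $\mathcal{A}[x,\tilde{\sigma},0]$ is the set of formal sums $\sum_{k=0}^m f_kx^k$ with $f_k\in\mathcal{A}$, with coefficientwise addition and with multiplication the bilinear extension of $(fx^k)(gx^l)=f\,\tilde{\sigma}^k(g)\,x^{k+l}$; $\mathcal{A}$ is identified with the degree-$0$ elements. The centralizer of $\mathcal{A}$ is the set of elements commuting with every element of $\mathcal{A}$. For an integer $k$, $Sep^k(J)=\{p\in J:\sigma^k(p)\neq p\}$ (so $Sep^0(J)=\emptyset$). *)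

theory Defs
  imports Complex_Main "HOL-Library.Countable"
begin

definition Alg :: "('j \<Rightarrow> real) set" where
  "Alg = {f. finite {p. f p \<noteq> 0}}"

type_synonym 'j skew_poly = "nat \<Rightarrow> ('j \<Rightarrow> real)"

definition SkewPoly :: "'j skew_poly set" where
  "SkewPoly = {P. (\<forall>k. P k \<in> Alg) \<and> finite {k. P k \<noteq> (\<lambda>_. 0)}}"

definition sigma_tilde :: "('j \<Rightarrow> 'j) \<Rightarrow> ('j \<Rightarrow> real) \<Rightarrow> ('j \<Rightarrow> real)" where
  "sigma_tilde \<sigma> f = f \<circ> inv \<sigma>"

text \<open>Multiplication: bilinear extension of (f x^k)(g x^l) = f sigma_tilde^k(g) x^(k+l).\<close>
definition skew_mult :: "('j \<Rightarrow> 'j) \<Rightarrow> 'j skew_poly \<Rightarrow> 'j skew_poly \<Rightarrow> 'j skew_poly" where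
  "skew_mult \<sigma> P Q = (\<lambda>n p. \<Sum>k\<le>n. P k p * ((sigma_tilde \<sigma> ^^ k) (Q (n - k))) p)"

definition deg0 :: "('j \<Rightarrow> real) \<Rightarrow> 'j skew_poly" where
  "deg0 a = (\<lambda>k. if k = 0 then a else (\<lambda>_. 0))"

definition centralizer :: "('j \<Rightarrow> 'j) \<Rightarrow> 'j skew_poly set" where
  "centralizer \<sigma> = {P \<in> SkewPoly. \<forall>a \<in> Alg. skew_mult \<sigma> (deg0 a) P = skew_mult \<sigma> P (deg0 a)}"

definition Sep :: "('j \<Rightarrow> 'j) \<Rightarrow> nat \<Rightarrow> 'j set" where
  "Sep \<sigma> k = {p. (\<sigma> ^^ k) p \<noteq> p}"

end

theory Submission
  imports Defs
begin

text \<open>Multiplying by a degree-0 element a scales the k-th coefficient by a on the left and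
  by the shifted function a \<circ> (inv \<sigma> ^^ k) on the right. Testing against point indicators
  shows that a coefficient commutes with all of Alg exactly when it vanishes wherever
  inv \<sigma> ^^ k moves a point, i.e. wherever \<sigma> ^^ k does.\<close>

lemma sigma_tilde_funpow: "(sigma_tilde \<sigma> ^^ k) a = a \<circ> (inv \<sigma> ^^ k)"
proof (induction k arbitrary: a)
  case 0
  then show ?case by simp
next
  case (Suc k)
  have "(sigma_tilde \<sigma> ^^ Suc k) a = (sigma_tilde \<sigma> ^^ k) (a \<circ> inv \<sigma>)"
    by (simp add: funpow_swap1 sigma_tilde_def)
  also have "\<dots> = (a \<circ> inv \<sigma>) \<circ> (inv \<sigma> ^^ k)"
    by (rule Suc.IH)
  also have "\<dots> = a \<circ> (inv \<sigma> ^^ Suc k)"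
    by (simp only: funpow.simps comp_assoc)
  finally show ?case .
qed

lemma skew_mult_deg0_left: "skew_mult \<sigma> (deg0 a) P n p = a p * P n p"
proof -
  have "skew_mult \<sigma> (deg0 a) P n p = (\<Sum>k\<le>n. if k = 0 then a p * P n p else 0)"
    unfolding skew_mult_def deg0_def by (intro sum.cong) auto
  then show ?thesis by simp
qed

lemma skew_mult_deg0_right: "skew_mult \<sigma> P (deg0 a) n p = P n p * a ((inv \<sigma> ^^ n) p)"
proof -
  have "skew_mult \<sigma> P (deg0 a) n p = (\<Sum>k\<le>n. if k = n then P n p * a ((inv \<sigma> ^^ n) p) else 0)"
    unfolding skew_mult_def deg0_def by (intro sum.cong) (auto simp: sigma_tilde_funpow)
  then show ?thesis by simp
qed

lemma commutes_with_Alg_iff: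
  "(\<forall>a \<in> Alg. skew_mult \<sigma> (deg0 a) P = skew_mult \<sigma> P (deg0 a))
     \<longleftrightarrow> (\<forall>n p. (inv \<sigma> ^^ n) p \<noteq> p \<longrightarrow> P n p = 0)"
proof
  assume comm: "\<forall>a \<in> Alg. skew_mult \<sigma> (deg0 a) P = skew_mult \<sigma> P (deg0 a)"
  show "\<forall>n p. (inv \<sigma> ^^ n) p \<noteq> p \<longrightarrow> P n p = 0"
  proof (intro allI impI)
    fix n p
    assume moved: "(inv \<sigma> ^^ n) p \<noteq> p"
    define e :: "'a \<Rightarrow> real" where "e = (\<lambda>q. if q = p then 1 else 0)"
    have "e \<in> Alg"
      unfolding Alg_def e_def by simp
    with comm have "skew_mult \<sigma> (deg0 e) P n p = skew_mult \<sigma> P (deg0 e) n p"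
      by simp
    then show "P n p = 0"
      using moved by (simp add: skew_mult_deg0_left skew_mult_deg0_right e_def)
  qed
next
  assume "\<forall>n p. (inv \<sigma> ^^ n) p \<noteq> p \<longrightarrow> P n p = 0"
  then have "a p * P n p = P n p * a ((inv \<sigma> ^^ n) p)" for a n p
    by (cases "(inv \<sigma> ^^ n) p = p") auto
  then show "\<forall>a \<in> Alg. skew_mult \<sigma> (deg0 a) P = skew_mult \<sigma> P (deg0 a)"
    by (simp add: fun_eq_iff skew_mult_deg0_left skew_mult_deg0_right)
qed

lemma funpow_inv_fixpoint_iff:
  assumes "bij f"
  shows "(inv f ^^ n) x = x \<longleftrightarrow> (f ^^ n) x = x"
proof -
  have "x = inv (f ^^ n) x \<longleftrightarrow> (f ^^ n) x = x"
    using bij_fn[OF assms] by (rule bij_inv_eq_iff)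
  then show ?thesis
    unfolding inv_fn[OF assms] by auto
qed

theorem theorem7:
  fixes \<sigma> :: "'j::countable \<Rightarrow> 'j"
  assumes "bij \<sigma>"
  shows "centralizer \<sigma> = {P \<in> SkewPoly. \<forall>k. \<forall>p \<in> Sep \<sigma> k. P k p = 0}"
  unfolding centralizer_def Sep_def commutes_with_Alg_iff
  by (simp add: funpow_inv_fixpoint_iff[OF assms])

end
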